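(* Let $k\geq1$ and let $I_1,\ldots,I_n$ be a partition of $\{1,\ldots,k\}$. Let $a=(a_1,\ldots,a_k)\in\mathbb{R}^k$ and define $b=(b_1,\ldots,b_n)\in\mathbb{R}^n$ by $b_i=\sum_{j\in I_i}a_j$. If $a\in\Delta_k$ then $b\in\Delta_n$.
   Context: For $m\geq1$, $\Delta_m$ is the set of $(a_1,\ldots,a_m)\in[0,1]^m$ with $\sum_{j=1}^ma_j\leq1$ and $a_i+\sum_{j=1}^ma_j\geq1$ for every $i\in\{1,\ldots,m\}$. *)

theory Defs
  imports Main "HOL.Real"
begin

definition Delta :: "nat \<Rightarrow> (nat \<Rightarrow> real) set" where
  "Delta m = {a. (\<forall>i\<in>{1..m}. 0 \<le> a i \<and> a i \<le> 1)
                 \<and> (\<Sum>j=1..m. a j) \<le> 1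
                 \<and> (\<forall>i\<in>{1..m}. a i + (\<Sum>j=1..m. a j) \<ge> 1)}"

end

theory Submission
  imports Defs
begin

text \<open>Each block sum b_i lies between a single summand a_j (for any j in I_i) and the total
  sum, which is the same for a and b because the blocks partition the index set.\<close>

lemma sum_over_partition:
  assumes "finite N" and "finite A"
    and "\<forall>i\<in>N. \<forall>j\<in>N. i \<noteq> j \<longrightarrow> I i \<inter> I j = {}"
    and "(\<Union>i\<in>N. I i) = A"
  shows "(\<Sum>i\<in>N. sum f (I i)) = sum f A"
proof -
  have "finite (I i)" if "i \<in> N" for i
    using that assms(2,4) by (metis UN_upper finite_subset)
  then have "(\<Sum>i\<in>N. sum f (I i)) = sum f (\<Union>i\<in>N. I i)"
    using assms(1,3) by (simp add: sum.UNION_disjoint)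
  then show ?thesis using assms(4) by simp
qed

lemma
  fixes f :: "'a \<Rightarrow> 'b::ordered_comm_monoid_add"
  assumes "finite A" and "B \<subseteq> A" and "\<forall>j\<in>A. 0 \<le> f j"
  shows sum_subset_nonneg: "0 \<le> sum f B"
    and sum_subset_le_sum: "sum f B \<le> sum f A"
    and member_le_sum_subset: "j \<in> B \<Longrightarrow> f j \<le> sum f B"
proof -
  have fin: "finite B" and nonneg: "\<forall>j\<in>B. 0 \<le> f j"
    using assms finite_subset by blast+
  show "0 \<le> sum f B" using nonneg by (simp add: sum_nonneg)
  show "sum f B \<le> sum f A" using assms by (intro sum_mono2) auto
  show "f j \<le> sum f B" if "j \<in> B" using sum_mono2[OF fin, of "{j}" f] that nonneg by simp
qed

theorem lemma1p3:
  fixes k n :: nat and I :: "nat \<Rightarrow> nat set" and a :: "nat \<Rightarrow> real"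
  assumes "k \<ge> 1"
    and "\<forall>i\<in>{1..n}. I i \<noteq> {}"
    and "\<forall>i\<in>{1..n}. \<forall>j\<in>{1..n}. i \<noteq> j \<longrightarrow> I i \<inter> I j = {}"
    and "(\<Union>i\<in>{1..n}. I i) = {1..k}"
    and "a \<in> Delta k"
  shows "(\<lambda>i. \<Sum>j\<in>I i. a j) \<in> Delta n"
proof -
  let ?S = "\<Sum>j=1..k. a j"
  have nonneg: "\<forall>j\<in>{1..k}. 0 \<le> a j" and total_le: "?S \<le> 1"
    and plus_total_ge: "\<And>j. j \<in> {1..k} \<Longrightarrow> a j + ?S \<ge> 1"
    using assms(5) unfolding Delta_def by auto
  have block: "I i \<subseteq> {1..k}" if "i \<in> {1..n}" for i
    using that assms(4) by blast
  have total: "(\<Sum>i=1..n. \<Sum>j\<in>I i. a j) = ?S"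
    using assms(3,4) by (intro sum_over_partition) auto
  have block_plus_total_ge: "1 \<le> (\<Sum>j\<in>I i. a j) + ?S" if i: "i \<in> {1..n}" for i
  proof -
    obtain j where j: "j \<in> I i" using i assms(2) by blast
    have "a j \<le> (\<Sum>j\<in>I i. a j)"
      using member_le_sum_subset[OF _ block[OF i] nonneg j] by simp
    moreover have "1 \<le> a j + ?S" using plus_total_ge block[OF i] j by blast
    ultimately show ?thesis by linarith
  qed
  have block_le: "(\<Sum>j\<in>I i. a j) \<le> 1" if "i \<in> {1..n}" for i
    using sum_subset_le_sum[OF _ block[OF that] nonneg] total_le by simp
  have block_nonneg: "0 \<le> (\<Sum>j\<in>I i. a j)" if "i \<in> {1..n}" for i
    using sum_subset_nonneg[OF _ block[OF that] nonneg] by simp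
  show ?thesis
    unfolding Delta_def mem_Collect_eq total
    using block_plus_total_ge block_le block_nonneg total_le by (intro conjI ballI) auto
qed

end
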